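(* Let $n,k,d$ be integers with $1\le k\le d<n$, let $\alpha>0$, and for each integer $M\ge0$ put $n_M=n+M$, $k_M=k+M$, $d_M=d+M$, $\gamma_{MSR}=\frac{d_M\alpha}{d_M-k_M+1}$ and $\gamma_{MBR}=\alpha$. Let $s\in[0,1]$ be fixed. Then $$\lim_{M\to\infty}\frac{C^{\mathrm{exact}}_{n_M,k_M,d_M}\big(\alpha,\,s\gamma_{MSR}+(1-s)\gamma_{MBR}\big)}{C_{k_M,d_M}\big(\alpha,\,s\gamma_{MSR}+(1-s)\gamma_{MBR}\big)}=1.$$
   Context: A distributed storage system (DSS) with parameters $(n,k,d)$ stores a file across $n$ nodes, each storing an amount $\alpha$ of information (e.g. $\alpha$ symbols over a finite field, where symbols may be split into arbitrarily many sub-symbols), such that the file can be reconstructed from the contents of any $k$ nodes, and any lost node can be repaired by contacting any $d$ of the remaining nodes, each of which transmits an amount $\beta$ to the replacement node, for a total repair bandwidth $\gamma=d\beta$. Repair is exact: the replacement node stores exactly the same content as the lost node. $C^{\mathrm{exact}}_{n,k,d}(\alpha,\gamma)$ denotes the maximum size of a file that can be stored by such an exact-repair DSS with $n$ nodes, node size $\alpha$ and total repair bandwidth $\gamma$. Also $C_{k,d}(\alpha,\gamma)=\sum_{j=0}^{k-1}\min\{\alpha,\frac{d-j}{d}\gamma\}$ (the functional-repair capacity). *)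

theory Defs
  imports Complex_Main
begin

text \<open>Nodes are 0..n-1. The file is an element
 x of {0..<F}; node i stores f i x, an element of {0..<A}. When node j is lost and the helper
 set H (d nodes other than j) is contacted, helper i sends g i j H w (an element of {0..<B})
 computed from its own content w only.\<close>

definition exact_repair_code ::
  "nat \<Rightarrow> nat \<Rightarrow> nat \<Rightarrow> nat \<Rightarrow> nat \<Rightarrow> nat \<Rightarrow>
   (nat \<Rightarrow> nat \<Rightarrow> nat) \<Rightarrow> (nat \<Rightarrow> nat \<Rightarrow> nat set \<Rightarrow> nat \<Rightarrow> nat) \<Rightarrow> bool" where
  "exact_repair_code n k d F A B f g \<longleftrightarrow>
     (\<forall>i<n. \<forall>x<F. f i x < A) \<and>
     (\<forall>i<n. \<forall>j<n. \<forall>H. \<forall>w<A. g i j H w < B) \<and>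
     (\<forall>K. K \<subseteq> {..<n} \<and> card K = k \<longrightarrow>
        (\<forall>x<F. \<forall>y<F. (\<forall>i\<in>K. f i x = f i y) \<longrightarrow> x = y)) \<and>
     (\<forall>j<n. \<forall>H. H \<subseteq> {..<n} - {j} \<and> card H = d \<longrightarrow>
        (\<forall>x<F. \<forall>y<F. (\<forall>i\<in>H. g i j H (f i x) = g i j H (f i y)) \<longrightarrow> f j x = f j y))"

text \<open>File size S is achievable with node size alpha and total repair bandwidth gamma if some
 exact-repair code, measured in an arbitrary information unit t > 0 (allowing arbitrary
 sub-symbolization), has node size log A \<le> alpha t, per-helper bandwidth
 log B \<le> (gamma/d) t, and file size log F = S t.\<close>

definition exact_achievable :: "nat \<Rightarrow> nat \<Rightarrow> nat \<Rightarrow> real \<Rightarrow> real \<Rightarrow> real \<Rightarrow> bool" where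
  "exact_achievable n k d \<alpha> \<gamma> S \<longleftrightarrow>
     (\<exists>F A B f g t. t > 0 \<and> exact_repair_code n k d F A B f g \<and>
        ln (real A) \<le> \<alpha> * t \<and> real d * ln (real B) \<le> \<gamma> * t \<and>
        S = ln (real F) / t)"

definition C_exact :: "nat \<Rightarrow> nat \<Rightarrow> nat \<Rightarrow> real \<Rightarrow> real \<Rightarrow> real" where
  "C_exact n k d \<alpha> \<gamma> = Sup {S. exact_achievable n k d \<alpha> \<gamma> S}"

definition C_func :: "nat \<Rightarrow> nat \<Rightarrow> real \<Rightarrow> real \<Rightarrow> real" where
  "C_func k d \<alpha> \<gamma> = (\<Sum>j<k. min \<alpha> ((real d - real j) / real d * \<gamma>))"

end

theory Submission
  imports Defs "HOL-Library.FuncSet" "HOL-Computational_Algebra.Polynomial"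
begin

text \<open>The cut-set argument bounds every exact-repair code by the functional-repair capacity, so the
  ratio never exceeds 1. Conversely, codes are built from polynomial evaluation over the integers;
  they need alphabets a constant factor larger than the symbols they carry, a loss that vanishes
  for large alphabets. At the MBR point (\<open>s = 0\<close>) the product-matrix codes meet the cut-set bound
  exactly. For \<open>s > 0\<close> the canonical layered codes with layer size \<open>r \<approx> s (N - 1) / (D - K + 1)\<close>
  respect the bandwidth and store at least a fraction \<open>1 - (N - K) / r\<close> of \<open>K \<alpha>\<close>, which bounds
  the functional-repair capacity. Along \<open>(n + M, k + M, d + M)\<close> the differences \<open>N - K\<close> and
  \<open>D - K\<close> stay fixed while \<open>r\<close> grows linearly in \<open>M\<close>, so the ratio tends to 1.\<close>

subsection \<open>The cut-set bound\<close>

lemma card_image_le_mult_card: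
  assumes "finite X" and "finite S" and "\<And>x. x \<in> X \<Longrightarrow> \<phi> x \<in> S"
    and determined: "\<And>x y. x \<in> X \<Longrightarrow> y \<in> X \<Longrightarrow> T x = T y \<Longrightarrow> \<phi> x = \<phi> y \<Longrightarrow> T' x = T' y"
  shows "card (T' ` X) \<le> card (T ` X) * card S"
proof -
  define h where "h p = T' (SOME x. x \<in> X \<and> (T x, \<phi> x) = p)" for p
  have "T' x = h (T x, \<phi> x)" if "x \<in> X" for x
  proof -
    have "\<exists>y. y \<in> X \<and> (T y, \<phi> y) = (T x, \<phi> x)" using that by blast
    from someI_ex[OF this] show ?thesis
      unfolding h_def using determined[OF that] by auto
  qed
  hence "T' ` X \<subseteq> h ` (T ` X \<times> S)" using assms(3) by auto
  hence "card (T' ` X) \<le> card (T ` X \<times> S)"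
    by (rule surj_card_le[rotated]) (simp add: assms(1,2))
  thus ?thesis by (simp add: card_cartesian_product)
qed

lemma exact_repair_codeD:
  assumes "exact_repair_code n k d F A B f g"
  shows "i < n \<Longrightarrow> x < F \<Longrightarrow> f i x < A"
    and "i < n \<Longrightarrow> j < n \<Longrightarrow> w < A \<Longrightarrow> g i j H w < B"
    and "K \<subseteq> {..<n} \<Longrightarrow> card K = k \<Longrightarrow> x < F \<Longrightarrow> y < F \<Longrightarrow> \<forall>i\<in>K. f i x = f i y \<Longrightarrow> x = y"
    and "j < n \<Longrightarrow> H \<subseteq> {..<n} - {j} \<Longrightarrow> card H = d \<Longrightarrow> x < F \<Longrightarrow> y < F \<Longrightarrow>
      \<forall>i\<in>H. g i j H (f i x) = g i j H (f i y) \<Longrightarrow> f j x = f j y"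
proof -
  note code = assms[unfolded exact_repair_code_def]
  show "i < n \<Longrightarrow> x < F \<Longrightarrow> f i x < A" using conjunct1[OF code] by blast
  show "i < n \<Longrightarrow> j < n \<Longrightarrow> w < A \<Longrightarrow> g i j H w < B"
    using conjunct1[OF conjunct2[OF code]] by blast
  show "K \<subseteq> {..<n} \<Longrightarrow> card K = k \<Longrightarrow> x < F \<Longrightarrow> y < F \<Longrightarrow> \<forall>i\<in>K. f i x = f i y \<Longrightarrow> x = y"
    using conjunct1[OF conjunct2[OF conjunct2[OF code]]] by blast
  show "j < n \<Longrightarrow> H \<subseteq> {..<n} - {j} \<Longrightarrow> card H = d \<Longrightarrow> x < F \<Longrightarrow> y < F \<Longrightarrow>
      \<forall>i\<in>H. g i j H (f i x) = g i j H (f i y) \<Longrightarrow> f j x = f j y"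
    using conjunct2[OF conjunct2[OF conjunct2[OF code]]] by blast
qed

text \<open>Node \<open>m\<close> is repaired from nodes \<open>0, \<dots>, d\<close> other than itself; the messages of the
  nodes before \<open>m\<close> are functions of what is already known, so only the \<open>d - m\<close> messages of
  the nodes after \<open>m\<close> carry new information.\<close>

lemma card_node_prefix_Suc_le:
  assumes code: "exact_repair_code n k d F A B f g" and "m < k" "k \<le> d" "d < n"
  shows "card ((\<lambda>x. map (\<lambda>i. f i x) [0..<Suc m]) ` {..<F})
    \<le> card ((\<lambda>x. map (\<lambda>i. f i x) [0..<m]) ` {..<F}) * min A (B ^ (d - m))"
    (is "card (?T (Suc m) ` _) \<le> card (?T m ` _) * _")
proof -
  let ?H = "{..d} - {m}"
  let ?msgs = "\<lambda>x. \<lambda>h\<in>{m<..d}. g h m ?H (f h x)"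
  have "card (?T (Suc m) ` {..<F}) \<le> card (?T m ` {..<F}) * card {..<A}"
    by (rule card_image_le_mult_card[where \<phi>="f m"])
      (use exact_repair_codeD(1)[OF code] assms in auto)
  moreover have "card (?T (Suc m) ` {..<F}) \<le> card (?T m ` {..<F}) * card (\<Pi>\<^sub>E h\<in>{m<..d}. {..<B})"
  proof (rule card_image_le_mult_card[where \<phi>="?msgs"])
    fix x y assume x: "x \<in> {..<F}" and y: "y \<in> {..<F}"
      and prefix: "?T m x = ?T m y" and msgs: "?msgs x = ?msgs y"
    have "g i m ?H (f i x) = g i m ?H (f i y)" if "i \<in> ?H" for i
    proof (cases "i < m")
      case True
      then show ?thesis using prefix by (simp add: map_eq_conv)
    next
      case False
      with that have "i \<in> {m<..d}" by auto
      then show ?thesis using fun_cong[OF msgs, of i] by simp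
    qed
    moreover have "?H \<subseteq> {..<n} - {m}" using assms by auto
    ultimately have "f m x = f m y"
      using exact_repair_codeD(4)[OF code, of m ?H x y] assms x y by auto
    with prefix show "?T (Suc m) x = ?T (Suc m) y" by simp
  qed (use exact_repair_codeD(1,2)[OF code] assms in \<open>auto intro: finite_PiE\<close>)
  ultimately show ?thesis by (simp add: card_PiE min_def)
qed

lemma card_file_le_cut_set_product:
  assumes code: "exact_repair_code n k d F A B f g" and "k \<le> d" "d < n"
  shows "F \<le> (\<Prod>j<k. min A (B ^ (d - j)))"
proof -
  let ?T = "\<lambda>m x. map (\<lambda>i. f i x) [0..<m]"
  have "card (?T m ` {..<F}) \<le> (\<Prod>j<m. min A (B ^ (d - j)))" if "m \<le> k" for m
    using that
  proof (induction m)
    case 0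
    have "?T 0 ` {..<F} \<subseteq> {[]}" by auto
    thus ?case using card_mono[of "{[]}"] by simp
  next
    case (Suc m)
    have "card (?T (Suc m) ` {..<F}) \<le> card (?T m ` {..<F}) * min A (B ^ (d - m))"
      using card_node_prefix_Suc_le[OF code _ assms(2,3), of m] Suc.prems by simp
    also have "\<dots> \<le> (\<Prod>j<m. min A (B ^ (d - j))) * min A (B ^ (d - m))"
      using Suc by simp
    finally show ?case by simp
  qed
  moreover have "inj_on (?T k) {..<F}"
    by (rule inj_onI, rule exact_repair_codeD(3)[OF code, of "{..<k}"])
      (use assms in \<open>auto simp: map_eq_conv\<close>)
  ultimately show ?thesis by (metis card_image card_lessThan order_refl)
qed

lemma ln_cut_set_term_le:
  assumes "0 < A" "0 < B" "0 < t" "j < d"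
    and lnA: "ln (real A) \<le> \<alpha> * t" and lnB: "real d * ln (real B) \<le> \<gamma> * t"
  shows "ln (real (min A (B ^ (d - j)))) \<le> t * min \<alpha> ((real d - real j) / real d * \<gamma>)"
proof -
  have "ln (real (min A (B ^ (d - j)))) \<le> ln (real B ^ (d - j))"
    using assms(1,2) by (subst ln_le_cancel_iff) auto
  also have "\<dots> = (real d - real j) / real d * (real d * ln (real B))"
    using assms(2,4) by (simp add: ln_realpow of_nat_diff)
  also have "\<dots> \<le> (real d - real j) / real d * (\<gamma> * t)"
    using lnB assms(4) by (intro mult_left_mono) auto
  finally have "ln (real (min A (B ^ (d - j)))) \<le> t * ((real d - real j) / real d * \<gamma>)"
    by (simp add: algebra_simps)
  moreover have "ln (real (min A (B ^ (d - j)))) \<le> ln (real A)"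
    using assms(1,2) by (subst ln_le_cancel_iff) auto
  ultimately show ?thesis
    using lnA assms(3) by (simp add: min_mult_distrib_left mult.commute)
qed

lemma exact_achievable_le_C_func:
  assumes "1 \<le> k" "k \<le> d" "d < n" "\<alpha> \<ge> 0" "\<gamma> \<ge> 0" and "exact_achievable n k d \<alpha> \<gamma> S"
  shows "S \<le> C_func k d \<alpha> \<gamma>"
proof -
  obtain F A B f g t where "t > 0" and code: "exact_repair_code n k d F A B f g"
    and lnA: "ln (real A) \<le> \<alpha> * t" and lnB: "real d * ln (real B) \<le> \<gamma> * t"
    and S: "S = ln (real F) / t"
    using assms(6) unfolding exact_achievable_def by blast
  show ?thesis
  proof (cases "F = 0")
    case True
    have "0 \<le> C_func k d \<alpha> \<gamma>"
      unfolding C_func_def using assms(2,4,5) by (intro sum_nonneg) auto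
    thus ?thesis using True S by simp
  next
    case False
    have "0 < A" using exact_repair_codeD(1)[OF code, of 0 0] False assms by linarith
    moreover have "g 0 0 {} 0 < B"
      by (rule exact_repair_codeD(2)[OF code]) (use \<open>0 < A\<close> assms in auto)
    hence "0 < B" by simp
    ultimately have pos: "0 < real (min A (B ^ (d - j)))" for j by simp
    have "ln (real F) \<le> ln (\<Prod>j<k. real (min A (B ^ (d - j))))"
      using card_file_le_cut_set_product[OF code assms(2,3)] False pos
      by (subst ln_le_cancel_iff) (auto intro: prod_pos simp flip: of_nat_prod)
    also have "\<dots> = (\<Sum>j<k. ln (real (min A (B ^ (d - j)))))"
      using pos by (subst ln_prod) (auto simp: less_imp_neq[symmetric])
    also have "\<dots> \<le> (\<Sum>j<k. t * min \<alpha> ((real d - real j) / real d * \<gamma>))"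
      using ln_cut_set_term_le[OF \<open>0 < A\<close> \<open>0 < B\<close> \<open>t > 0\<close> _ lnA lnB] assms(2)
      by (intro sum_mono) auto
    also have "\<dots> = t * C_func k d \<alpha> \<gamma>" by (simp add: C_func_def sum_distrib_left)
    finally show ?thesis using S \<open>t > 0\<close> by (simp add: divide_le_eq mult.commute)
  qed
qed

lemma exact_achievable_zero:
  assumes "\<alpha> \<ge> 0" "\<gamma> \<ge> 0"
  shows "exact_achievable n k d \<alpha> \<gamma> 0"
proof -
  have "exact_repair_code n k d 1 1 1 (\<lambda>_ _. 0) (\<lambda>_ _ _ _. 0)"
    unfolding exact_repair_code_def by auto
  thus ?thesis unfolding exact_achievable_def using assms
    by (intro exI[of _ "1::nat"] exI[of _ "\<lambda>_ _. 0::nat"] exI[of _ "\<lambda>_ _ _ _. 0::nat"] exI[of _ "1::real"]) auto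
qed

lemma C_exact_le_C_func:
  assumes "1 \<le> k" "k \<le> d" "d < n" "\<alpha> \<ge> 0" "\<gamma> \<ge> 0"
  shows "C_exact n k d \<alpha> \<gamma> \<le> C_func k d \<alpha> \<gamma>"
  unfolding C_exact_def
  using exact_achievable_zero[OF assms(4,5)] exact_achievable_le_C_func[OF assms]
  by (intro cSup_least) auto

lemma exact_achievable_le_C_exact:
  assumes "1 \<le> k" "k \<le> d" "d < n" "\<alpha> \<ge> 0" "\<gamma> \<ge> 0" and "exact_achievable n k d \<alpha> \<gamma> S"
  shows "S \<le> C_exact n k d \<alpha> \<gamma>"
  unfolding C_exact_def
  using exact_achievable_le_C_func[OF assms(1-5)] assms(6)
  by (intro cSup_upper) (auto simp: bdd_above_def)

subsection \<open>Codes over arbitrary finite alphabets\<close>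

locale exact_repair_code_on =
  fixes n k d :: nat and X :: "'x set" and Y :: "nat \<Rightarrow> 'y set"
    and Z :: "nat \<Rightarrow> nat \<Rightarrow> nat set \<Rightarrow> 'z set"
    and f :: "nat \<Rightarrow> 'x \<Rightarrow> 'y" and g :: "nat \<Rightarrow> nat \<Rightarrow> nat set \<Rightarrow> 'y \<Rightarrow> 'z"
  assumes finite_files: "finite X"
    and finite_contents: "finite (Y i)"
    and finite_messages: "finite (Z i j H)"
    and contents_in: "i < n \<Longrightarrow> x \<in> X \<Longrightarrow> f i x \<in> Y i"
    and message_in: "i < n \<Longrightarrow> j < n \<Longrightarrow> w \<in> Y i \<Longrightarrow> g i j H w \<in> Z i j H"
    and reconstruct: "K \<subseteq> {..<n} \<Longrightarrow> card K = k \<Longrightarrow> x \<in> X \<Longrightarrow> y \<in> X \<Longrightarrow>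
      \<forall>i\<in>K. f i x = f i y \<Longrightarrow> x = y"
    and repair: "j < n \<Longrightarrow> H \<subseteq> {..<n} - {j} \<Longrightarrow> card H = d \<Longrightarrow> x \<in> X \<Longrightarrow> y \<in> X \<Longrightarrow>
      \<forall>i\<in>H. g i j H (f i x) = g i j H (f i y) \<Longrightarrow> f j x = f j y"
begin

lemma exact_repair_code_of_card_le:
  assumes card_Y: "\<And>i. card (Y i) \<le> A" and card_Z: "\<And>i j H. card (Z i j H) \<le> B" and "1 \<le> B"
  shows "\<exists>f' g'. exact_repair_code n k d (card X) A B f' g'"
proof -
  obtain pick where pick: "bij_betw pick {..<card X} X"
    using ex_bij_betw_nat_finite[OF finite_files] by (auto simp: atLeast0LessThan)
  have "\<exists>e. e ` Y i \<subseteq> {..<A} \<and> inj_on e (Y i)" for i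
    using card_le_inj[of "Y i" "{..<A}"] finite_contents card_Y by auto
  then obtain e where e: "\<And>i. e i ` Y i \<subseteq> {..<A}" "\<And>i. inj_on (e i) (Y i)" by metis
  have "\<exists>e. e ` Z i j H \<subseteq> {..<B} \<and> inj_on e (Z i j H)" for i j H
    using card_le_inj[of "Z i j H" "{..<B}"] finite_messages card_Z by auto
  then obtain e' where e': "\<And>i j H. e' i j H ` Z i j H \<subseteq> {..<B}" "\<And>i j H. inj_on (e' i j H) (Z i j H)"
    by metis
  define f' where "f' i m = e i (f i (pick m))" for i m
  define g' where "g' i j H w =
    (if w \<in> e i ` Y i then e' i j H (g i j H (inv_into (Y i) (e i) w)) else 0)" for i j H w
  have pick_in: "m < card X \<Longrightarrow> pick m \<in> X" for m using pick by (auto simp: bij_betw_def)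
  have g'_f': "g' i j H (f' i m) = e' i j H (g i j H (f i (pick m)))" if "i < n" "m < card X" for i j H m
    using contents_in[OF that(1) pick_in[OF that(2)]] e(2) by (simp add: g'_def f'_def)
  have "exact_repair_code n k d (card X) A B f' g'"
    unfolding exact_repair_code_def
  proof (intro conjI allI impI ballI)
    fix i x assume "i < n" "x < card X"
    thus "f' i x < A" using contents_in pick_in e(1) by (fastforce simp: f'_def)
  next
    fix i j H w assume "i < n" "j < n" "w < A"
    thus "g' i j H w < B"
      using message_in[OF \<open>i < n\<close> \<open>j < n\<close> inv_into_into] e'(1) \<open>1 \<le> B\<close> by (fastforce simp: g'_def)
  next
    fix K x y assume K: "K \<subseteq> {..<n} \<and> card K = k" and xy: "x < card X" "y < card X"
      and eq: "\<forall>i\<in>K. f' i x = f' i y"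
    have "f i (pick x) = f i (pick y)" if "i \<in> K" for i
    proof -
      have "i < n" using K that by auto
      moreover have "e i (f i (pick x)) = e i (f i (pick y))" using eq that by (simp add: f'_def)
      ultimately show ?thesis using inj_onD[OF e(2)] contents_in pick_in xy by blast
    qed
    hence "pick x = pick y" using reconstruct K pick_in xy by blast
    thus "x = y" using pick xy by (auto simp: bij_betw_def inj_on_def)
  next
    fix j H x y assume j: "j < n" and H: "H \<subseteq> {..<n} - {j} \<and> card H = d"
      and xy: "x < card X" "y < card X" and eq: "\<forall>i\<in>H. g' i j H (f' i x) = g' i j H (f' i y)"
    have "g i j H (f i (pick x)) = g i j H (f i (pick y))" if "i \<in> H" for i
    proof -
      have "i < n" using H that by auto
      moreover have "e' i j H (g i j H (f i (pick x))) = e' i j H (g i j H (f i (pick y)))"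
        using eq that g'_f' \<open>i < n\<close> xy by metis
      ultimately show ?thesis using inj_onD[OF e'(2)] message_in[OF _ j contents_in[OF _ pick_in]] xy
        by blast
    qed
    hence "f j (pick x) = f j (pick y)" using repair j H pick_in xy by blast
    thus "f' j x = f' j y" by (simp add: f'_def)
  qed
  thus ?thesis by blast
qed

lemma exact_achievable_of_card_le_power:
  assumes "\<alpha> > 0" "0 < Au" "2 \<le> Q" and bandwidth: "real d * real Bu * \<alpha> \<le> \<gamma> * real Au"
    and "\<And>i. card (Y i) \<le> Q ^ Au" "\<And>i j H. card (Z i j H) \<le> Q ^ Bu"
  shows "exact_achievable n k d \<alpha> \<gamma> (\<alpha> * ln (real (card X)) / (real Au * ln (real Q)))"
proof -
  obtain f' g' where code: "exact_repair_code n k d (card X) (Q ^ Au) (Q ^ Bu) f' g'"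
    using exact_repair_code_of_card_le assms(3,5,6) by (metis one_le_power Suc_1 Suc_leD)
  have "0 < ln (real Q)" using assms(3) by simp
  define t where "t = real Au * ln (real Q) / \<alpha>"
  have "0 < t" using assms(1,2) \<open>0 < ln (real Q)\<close> by (simp add: t_def)
  moreover have "ln (real (Q ^ Au)) \<le> \<alpha> * t" using assms(1) by (simp add: t_def ln_realpow)
  moreover have "real d * ln (real (Q ^ Bu)) \<le> \<gamma> * t"
  proof -
    have "real d * ln (real (Q ^ Bu)) = real d * real Bu * \<alpha> * ln (real Q) / \<alpha>"
      using assms(1) by (simp add: ln_realpow)
    also have "\<dots> \<le> \<gamma> * real Au * ln (real Q) / \<alpha>"
      using bandwidth \<open>0 < ln (real Q)\<close> assms(1) by (intro divide_right_mono mult_right_mono) auto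
    finally show ?thesis by (simp add: t_def)
  qed
  moreover have "\<alpha> * ln (real (card X)) / (real Au * ln (real Q)) = ln (real (card X)) / t"
    using assms(1) by (simp add: t_def)
  ultimately show ?thesis
    unfolding exact_achievable_def using code by blast
qed

end

text \<open>The integer codes constructed below need alphabets a fixed factor \<open>W\<close> larger than the
  \<open>q\<close> symbols they encode; with \<open>q = W ^ m\<close> the resulting rate loss \<open>m / (m + 1)\<close> vanishes.\<close>

lemma C_exact_ge_of_code_family:
  fixes Fu Au Bu W :: nat
  assumes "1 \<le> k" "k \<le> d" "d < n" "\<alpha> > 0" "\<gamma> \<ge> 0" "0 < Au" "2 \<le> W"
    and bandwidth: "real d * real Bu * \<alpha> \<le> \<gamma> * real Au"
    and family: "\<And>q. 2 \<le> q \<Longrightarrow> \<exists>(X::'x set) (Y::nat \<Rightarrow> 'y set) (Z::nat \<Rightarrow> nat \<Rightarrow> nat set \<Rightarrow> 'z set) f g.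
        exact_repair_code_on n k d X Y Z f g \<and> card X = q ^ Fu \<and>
        (\<forall>i. card (Y i) \<le> (q * W) ^ Au) \<and> (\<forall>i j H. card (Z i j H) \<le> (q * W) ^ Bu)"
  shows "\<alpha> * real Fu / real Au \<le> C_exact n k d \<alpha> \<gamma>"
proof (rule LIMSEQ_le_const2)
  show "(\<lambda>m. \<alpha> * real Fu / real Au * (real m / real (Suc m))) \<longlonglongrightarrow> \<alpha> * real Fu / real Au"
    using tendsto_mult_left[OF LIMSEQ_n_over_Suc_n] by (metis mult_1_right)
  have "\<alpha> * real Fu / real Au * (real m / real (Suc m)) \<le> C_exact n k d \<alpha> \<gamma>" if m: "1 \<le> m" for m
  proof -
    have W_pow: "2 \<le> W ^ j" if "1 \<le> j" for j
      using power_increasing[OF that, of W] assms(7) by simp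
    obtain X :: "'x set" and Y :: "nat \<Rightarrow> 'y set" and Z :: "nat \<Rightarrow> nat \<Rightarrow> nat set \<Rightarrow> 'z set" and f g
      where code: "exact_repair_code_on n k d X Y Z f g" and "card X = (W ^ m) ^ Fu"
        and "\<forall>i. card (Y i) \<le> (W ^ m * W) ^ Au" "\<forall>i j H. card (Z i j H) \<le> (W ^ m * W) ^ Bu"
      using family[OF W_pow[OF m]] by blast
    hence "exact_achievable n k d \<alpha> \<gamma> (\<alpha> * ln (real ((W ^ m) ^ Fu)) / (real Au * ln (real (W ^ m * W))))"
      using exact_repair_code_on.exact_achievable_of_card_le_power[OF code assms(4,6)
          W_pow[of "Suc m", unfolded power_Suc2] bandwidth] by simp
    moreover have "\<alpha> * ln (real ((W ^ m) ^ Fu)) / (real Au * ln (real (W ^ m * W)))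
        = \<alpha> * real Fu / real Au * (real m / real (Suc m))"
    proof -
      have "ln (real (W ^ m * W)) = real (Suc m) * ln (real W)"
        using assms(7) by (simp add: ln_mult ln_realpow algebra_simps)
      moreover have "0 < ln (real W)" using assms(7) by simp
      ultimately show ?thesis using assms(6) by (simp add: ln_realpow field_simps del: of_nat_Suc)
    qed
    ultimately show ?thesis using exact_achievable_le_C_exact[OF assms(1-3) _ assms(5)] assms(4) by force
  qed
  thus "\<exists>N. \<forall>m\<ge>N. \<alpha> * real Fu / real Au * (real m / real (Suc m)) \<le> C_exact n k d \<alpha> \<gamma>" by blast
qed

subsection \<open>Polynomial evaluation codes over the integers\<close>

lemma coeffs_eq_if_agree_on_points:
  fixes c c' :: "nat \<Rightarrow> 'a::idom"
  assumes "finite P" and "m \<le> card P"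
    and agree: "\<And>x. x \<in> P \<Longrightarrow> (\<Sum>a<m. c a * x ^ a) = (\<Sum>a<m. c' a * x ^ a)"
  shows "\<forall>a<m. c a = c' a"
proof -
  define p where "p = (\<Sum>a<m. monom (c a - c' a) a)"
  have poly_p: "poly p x = (\<Sum>a<m. c a * x ^ a) - (\<Sum>a<m. c' a * x ^ a)" for x
    by (simp add: p_def poly_sum poly_monom sum_subtractf[symmetric] algebra_simps)
  have coeff_p: "coeff p b = (if b < m then c b - c' b else 0)" for b
    by (simp add: p_def coeff_sum coeff_monom)
  have "p = 0"
  proof (rule ccontr)
    assume "p \<noteq> 0"
    have "P \<subseteq> {x. poly p x = 0}" using agree poly_p by auto
    hence "card P \<le> card {x. poly p x = 0}"
      by (intro card_mono poly_roots_finite \<open>p \<noteq> 0\<close>)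
    also have "\<dots> \<le> degree p" by (rule card_poly_roots_bound[OF \<open>p \<noteq> 0\<close>])
    finally have "m \<le> degree p" using assms(2) by simp
    moreover have "coeff p (degree p) \<noteq> 0" using \<open>p \<noteq> 0\<close> by simp
    ultimately show False using coeff_p by simp
  qed
  thus ?thesis using coeff_p by (metis coeff_0 eq_iff_diff_eq_0)
qed

lemma coeffs_eq_if_agree_on_nat_points:
  fixes c c' :: "nat \<Rightarrow> int"
  assumes "finite S" "m \<le> card S"
    and "\<And>i. i \<in> S \<Longrightarrow> (\<Sum>a<m. c a * (int i + 1) ^ a) = (\<Sum>a<m. c' a * (int i + 1) ^ a)"
  shows "\<forall>a<m. c a = c' a"
  by (rule coeffs_eq_if_agree_on_points[of "(\<lambda>i. int i + 1) ` S"]) (use assms in \<open>auto simp: card_image inj_on_def\<close>)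

lemma poly_sum_bounds:
  fixes c :: "nat \<Rightarrow> int" and x Q :: int
  assumes c: "\<And>a. a < m \<Longrightarrow> 0 \<le> c a \<and> c a < Q" and "0 < Q" and x: "0 \<le> x" "x \<le> int N"
  shows "0 \<le> (\<Sum>a<m. c a * x ^ a) \<and> (\<Sum>a<m. c a * x ^ a) < Q * ((int m + 1) * (int N + 1) ^ m)"
proof
  show "0 \<le> (\<Sum>a<m. c a * x ^ a)" using c x by (intro sum_nonneg) auto
  have "(\<Sum>a<m. c a * x ^ a) \<le> (\<Sum>a<m. Q * (int N + 1) ^ m)"
  proof (rule sum_mono)
    fix a assume "a \<in> {..<m}"
    have "x ^ a \<le> (int N + 1) ^ a" using x by (intro power_mono) auto
    also have "\<dots> \<le> (int N + 1) ^ m" using \<open>a \<in> {..<m}\<close> by (intro power_increasing) auto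
    finally show "c a * x ^ a \<le> Q * (int N + 1) ^ m"
      using c[of a] \<open>a \<in> {..<m}\<close> x(1) by (intro mult_mono) auto
  qed
  also have "\<dots> < (int m + 1) * (Q * (int N + 1) ^ m)" using \<open>0 < Q\<close> by simp
  finally show "(\<Sum>a<m. c a * x ^ a) < Q * ((int m + 1) * (int N + 1) ^ m)" by (simp add: algebra_simps)
qed

text \<open>A column \<open>b \<ge> K\<close> vanishes below row \<open>K\<close>, so \<open>K\<close> evaluations determine it; by symmetry
  these columns supply the rows \<open>a \<ge> K\<close> of the remaining columns, which are then determined
  in the same way.\<close>

lemma symmetric_matrix_eq_if_columns_agree:
  fixes M M' :: "nat \<Rightarrow> nat \<Rightarrow> 'a::idom"
  assumes sym: "\<And>a b. M a b = M b a" "\<And>a b. M' a b = M' b a"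
    and zero: "\<And>a b. K \<le> a \<Longrightarrow> K \<le> b \<Longrightarrow> M a b = 0" "\<And>a b. K \<le> a \<Longrightarrow> K \<le> b \<Longrightarrow> M' a b = 0"
    and "K \<le> D" "finite P" "K \<le> card P"
    and agree: "\<And>x b. x \<in> P \<Longrightarrow> b < D \<Longrightarrow> (\<Sum>a<D. M a b * x ^ a) = (\<Sum>a<D. M' a b * x ^ a)"
    and "a < D" "b < D"
  shows "M a b = M' a b"
proof -
  have split: "(\<Sum>a<D. h a) = (\<Sum>a<K. h a) + (\<Sum>a\<in>{K..<D}. h a)" for h :: "nat \<Rightarrow> 'a"
    using \<open>K \<le> D\<close> by (simp add: lessThan_atLeast0 sum.atLeastLessThan_concat)
  have upper: "M a b = M' a b"
    if "a < K" "b < D" and lower: "\<And>a. K \<le> a \<Longrightarrow> a < D \<Longrightarrow> M a b = M' a b" for a b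
  proof -
    have "\<forall>a<K. M a b = M' a b"
    proof (rule coeffs_eq_if_agree_on_points[OF \<open>finite P\<close> \<open>K \<le> card P\<close>])
      fix x assume "x \<in> P"
      have "(\<Sum>a\<in>{K..<D}. M a b * x ^ a) = (\<Sum>a\<in>{K..<D}. M' a b * x ^ a)"
        using lower by (intro sum.cong) auto
      thus "(\<Sum>a<K. M a b * x ^ a) = (\<Sum>a<K. M' a b * x ^ a)"
        using agree[OF \<open>x \<in> P\<close> \<open>b < D\<close>] split[of "\<lambda>a. M a b * x ^ a"] split[of "\<lambda>a. M' a b * x ^ a"]
        by simp
    qed
    thus ?thesis using \<open>a < K\<close> by simp
  qed
  have off_diagonal: "M a b = M' a b" if "a < K" "K \<le> b" "b < D" for a b
    using upper[OF that(1,3)] that(2) zero by simp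
  show ?thesis
  proof (cases "a < K")
    case True
    show ?thesis
      by (rule upper[OF True \<open>b < D\<close>]) (metis sym off_diagonal zero linorder_not_le \<open>b < D\<close>)
  next
    case False
    thus ?thesis using off_diagonal[of b a] sym zero \<open>a < D\<close> by (cases "b < K") auto
  qed
qed

lemma symmetric_matrix_column_eq_if_products_agree:
  fixes M M' :: "nat \<Rightarrow> nat \<Rightarrow> 'a::idom"
  assumes sym: "\<And>a b. M a b = M b a" "\<And>a b. M' a b = M' b a"
    and "finite P" "D \<le> card P"
    and agree: "\<And>x. x \<in> P \<Longrightarrow>
      (\<Sum>b<D. (\<Sum>a<D. M a b * x ^ a) * y ^ b) = (\<Sum>b<D. (\<Sum>a<D. M' a b * x ^ a) * y ^ b)"
    and "b < D"
  shows "(\<Sum>a<D. M a b * y ^ a) = (\<Sum>a<D. M' a b * y ^ a)"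
proof -
  define c where "c M a = (\<Sum>b<D. M a b * y ^ b)" for M :: "nat \<Rightarrow> nat \<Rightarrow> 'a" and a
  have swap: "(\<Sum>b<D. (\<Sum>a<D. M a b * x ^ a) * y ^ b) = (\<Sum>a<D. c M a * x ^ a)" for M x
    unfolding c_def sum_distrib_right by (subst sum.swap) (simp add: algebra_simps)
  have "\<forall>a<D. c M a = c M' a"
    by (rule coeffs_eq_if_agree_on_points[OF assms(3,4)]) (use agree swap in metis)
  thus ?thesis using \<open>b < D\<close> by (simp add: c_def sym(1)[of _ b] sym(2)[of _ b])
qed

definition mbr_matrix :: "nat \<Rightarrow> nat \<Rightarrow> (nat \<times> nat \<Rightarrow> 'a::zero) \<Rightarrow> nat \<Rightarrow> nat \<Rightarrow> 'a" where
  "mbr_matrix K D v a b = (if min a b < K \<and> max a b < D then v (min a b, max a b) else 0)"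

definition mbr_index :: "nat \<Rightarrow> nat \<Rightarrow> (nat \<times> nat) set" where
  "mbr_index K D = {(a, b). a \<le> b \<and> a < K \<and> b < D}"

text \<open>The product-matrix MBR code of Rashmi, Shah and Kumar, over the integers: the message is the
  symmetric matrix \<open>M = mbr_matrix K D v\<close>, node \<open>i\<close> stores \<open>\<psi>\<^sub>i\<^sup>T M\<close> for
  \<open>\<psi>\<^sub>i = (1, x\<^sub>i, \<dots>, x\<^sub>i\<^sup>D\<^sup>-\<^sup>1)\<close> with \<open>x\<^sub>i = i + 1\<close>, and helper \<open>i\<close> sends
  \<open>\<psi>\<^sub>i\<^sup>T M \<psi>\<^sub>j\<close> to node \<open>j\<close>.\<close>

definition mbr_node :: "nat \<Rightarrow> nat \<Rightarrow> nat \<Rightarrow> (nat \<times> nat \<Rightarrow> int) \<Rightarrow> nat \<Rightarrow> int" where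
  "mbr_node K D i v = (\<lambda>b\<in>{..<D}. \<Sum>a<D. mbr_matrix K D v a b * (int i + 1) ^ a)"

definition mbr_message :: "nat \<Rightarrow> nat \<Rightarrow> (nat \<Rightarrow> int) \<Rightarrow> int" where
  "mbr_message D j w = (\<Sum>b<D. w b * (int j + 1) ^ b)"

lemma mbr_matrix_sym: "mbr_matrix K D v a b = mbr_matrix K D v b a"
  by (simp add: mbr_matrix_def min.commute max.commute)

lemma mbr_matrix_eq_0: "K \<le> a \<Longrightarrow> K \<le> b \<Longrightarrow> mbr_matrix K D v a b = 0"
  by (simp add: mbr_matrix_def min_def)

lemma mbr_node_reconstruct:
  assumes "K \<le> D" "finite Ks" "card Ks = K"
    and "v \<in> extensional (mbr_index K D)" "v' \<in> extensional (mbr_index K D)"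
    and eq: "\<forall>i\<in>Ks. mbr_node K D i v = mbr_node K D i v'"
  shows "v = v'"
proof (rule extensionalityI[OF assms(4,5)])
  fix p assume "p \<in> mbr_index K D"
  then obtain a b where p: "p = (a, b)" "a \<le> b" "b < D" by (auto simp: mbr_index_def)
  have agree: "(\<Sum>a<D. mbr_matrix K D v a c * x ^ a) = (\<Sum>a<D. mbr_matrix K D v' a c * x ^ a)"
    if x: "x \<in> (\<lambda>i. int i + 1) ` Ks" and "c < D" for x c
  proof -
    obtain i where "i \<in> Ks" "x = int i + 1" using x by blast
    thus ?thesis using fun_cong[OF bspec[OF eq \<open>i \<in> Ks\<close>], of c] \<open>c < D\<close> by (simp add: mbr_node_def)
  qed
  have "mbr_matrix K D v a b = mbr_matrix K D v' a b"
    by (rule symmetric_matrix_eq_if_columns_agree[OF mbr_matrix_sym mbr_matrix_sym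
          mbr_matrix_eq_0 mbr_matrix_eq_0 \<open>K \<le> D\<close> _ _ agree])
      (use p assms(2,3) in \<open>auto simp: card_image inj_on_def\<close>)
  thus "v p = v' p" using p \<open>p \<in> mbr_index K D\<close> by (simp add: mbr_matrix_def mbr_index_def)
qed

lemma mbr_node_repair:
  assumes "finite H" "card H = D"
    and eq: "\<forall>i\<in>H. mbr_message D j (mbr_node K D i v) = mbr_message D j (mbr_node K D i v')"
  shows "mbr_node K D j v = mbr_node K D j v'"
  unfolding mbr_node_def
proof (rule restrict_ext)
  fix b assume "b \<in> {..<D}"
  show "(\<Sum>a<D. mbr_matrix K D v a b * (int j + 1) ^ a) = (\<Sum>a<D. mbr_matrix K D v' a b * (int j + 1) ^ a)"
  proof (rule symmetric_matrix_column_eq_if_products_agree[OF mbr_matrix_sym mbr_matrix_sym])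
    show "finite ((\<lambda>i. int i + 1) ` H)" using assms(1) by simp
    show "D \<le> card ((\<lambda>i. int i + 1) ` H)" using assms(2) by (simp add: card_image inj_on_def)
    fix x assume "x \<in> (\<lambda>i. int i + 1) ` H"
    thus "(\<Sum>c<D. (\<Sum>a<D. mbr_matrix K D v a c * x ^ a) * (int j + 1) ^ c)
        = (\<Sum>c<D. (\<Sum>a<D. mbr_matrix K D v' a c * x ^ a) * (int j + 1) ^ c)"
      using eq by (auto simp: mbr_message_def mbr_node_def)
  qed (use \<open>b \<in> {..<D}\<close> in simp)
qed

lemma mbr_code_family:
  assumes "K \<le> D" "D < N" "1 \<le> q"
  shows "\<exists>(X::(nat \<times> nat \<Rightarrow> int) set) (Y::nat \<Rightarrow> (nat \<Rightarrow> int) set) (Z::nat \<Rightarrow> nat \<Rightarrow> nat set \<Rightarrow> int set) f g.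
    exact_repair_code_on N K D X Y Z f g \<and> card X = q ^ (\<Sum>j<K. D - j) \<and>
    (\<forall>i. card (Y i) \<le> (q * ((D + 1) * (N + 1) ^ D) ^ 2) ^ D) \<and>
    (\<forall>i j H. card (Z i j H) \<le> (q * ((D + 1) * (N + 1) ^ D) ^ 2) ^ 1)"
proof -
  define W where "W = (D + 1) * (N + 1) ^ D"
  define X :: "(nat \<times> nat \<Rightarrow> int) set" where "X = (\<Pi>\<^sub>E p\<in>mbr_index K D. {0..<int q})"
  define Y :: "nat \<Rightarrow> (nat \<Rightarrow> int) set" where "Y i = (\<Pi>\<^sub>E b\<in>{..<D}. {0..<int (q * W)})" for i
  define Z :: "nat \<Rightarrow> nat \<Rightarrow> nat set \<Rightarrow> int set" where "Z i j H = {0..<int (q * W ^ 2)}" for i j H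
  have "mbr_index K D \<subseteq> {..<K} \<times> {..<D}" by (auto simp: mbr_index_def)
  hence "finite (mbr_index K D)" by (rule finite_subset) auto
  have "0 < W" by (simp add: W_def)
  have W_eq: "int W = (int D + 1) * (int N + 1) ^ D" by (simp add: W_def algebra_simps)
  have contents_in: "mbr_node K D i v \<in> Y i" if "i < N" "v \<in> X" for i v
  proof -
    have "0 \<le> mbr_matrix K D v a b \<and> mbr_matrix K D v a b < int q" for a b
      using that(2) \<open>1 \<le> q\<close> by (auto simp: mbr_matrix_def X_def mbr_index_def PiE_iff)
    hence "0 \<le> (\<Sum>a<D. mbr_matrix K D v a b * (int i + 1) ^ a) \<and>
        (\<Sum>a<D. mbr_matrix K D v a b * (int i + 1) ^ a) < int q * ((int D + 1) * (int N + 1) ^ D)" for b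
      by (intro poly_sum_bounds) (use that(1) \<open>1 \<le> q\<close> in auto)
    thus ?thesis by (auto simp: mbr_node_def Y_def W_eq)
  qed
  have message_in: "mbr_message D j w \<in> Z i j H" if "j < N" "w \<in> Y i" for i j H w
  proof -
    have "\<And>b. b < D \<Longrightarrow> 0 \<le> w b \<and> w b < int (q * W)" using that(2) by (auto simp: Y_def PiE_iff)
    hence "0 \<le> (\<Sum>b<D. w b * (int j + 1) ^ b) \<and>
        (\<Sum>b<D. w b * (int j + 1) ^ b) < int (q * W) * ((int D + 1) * (int N + 1) ^ D)"
      by (intro poly_sum_bounds) (use that(1) \<open>1 \<le> q\<close> \<open>0 < W\<close> in auto)
    moreover have "int (q * W) * ((int D + 1) * (int N + 1) ^ D) = int (q * W ^ 2)"
      by (simp only: W_eq[symmetric] power2_eq_square of_nat_mult mult.assoc)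
    ultimately show ?thesis unfolding mbr_message_def Z_def by (metis atLeastLessThan_iff)
  qed
  have "exact_repair_code_on N K D X Y Z (mbr_node K D) (\<lambda>i j H. mbr_message D j)"
  proof unfold_locales
    show "v = v'" if "Ks \<subseteq> {..<N}" "card Ks = K" "v \<in> X" "v' \<in> X"
      and "\<forall>i\<in>Ks. mbr_node K D i v = mbr_node K D i v'" for Ks v v'
      using that by (intro mbr_node_reconstruct[OF \<open>K \<le> D\<close>]) (auto simp: X_def PiE_iff intro: finite_subset)
    show "mbr_node K D j v = mbr_node K D j v'" if "H \<subseteq> {..<N} - {j}" "card H = D"
      and "\<forall>i\<in>H. mbr_message D j (mbr_node K D i v) = mbr_message D j (mbr_node K D i v')" for j H v v'
      using that by (intro mbr_node_repair) (auto intro: finite_subset)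
  qed (use \<open>finite (mbr_index K D)\<close> contents_in message_in in \<open>auto simp: X_def Y_def Z_def intro: finite_PiE\<close>)
  moreover have "card X = q ^ (\<Sum>j<K. D - j)"
  proof -
    have "mbr_index K D = Sigma {..<K} (\<lambda>a. {a..<D})" by (auto simp: mbr_index_def)
    thus ?thesis using \<open>finite (mbr_index K D)\<close> by (simp add: X_def card_PiE card_SigmaI)
  qed
  moreover have "card (Y i) \<le> (q * W ^ 2) ^ D" for i
  proof -
    have "card (Y i) = (q * W) ^ D" by (simp add: Y_def card_PiE del: of_nat_mult)
    also have "\<dots> \<le> (q * W ^ 2) ^ D" using \<open>0 < W\<close> by (intro power_mono mult_le_mono2) (auto simp: power2_eq_square)
    finally show ?thesis .
  qed
  moreover have "card (Z i j H) \<le> (q * W ^ 2) ^ 1" for i j H by (simp add: Z_def del: of_nat_mult of_nat_power)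
  ultimately show ?thesis unfolding W_def by blast
qed

subsection \<open>Layered codes\<close>

lemma card_supersets:
  assumes "finite A" and "S \<subseteq> A" and "card S \<le> r"
  shows "card {L. L \<subseteq> A \<and> card L = r \<and> S \<subseteq> L} = (card A - card S) choose (r - card S)"
proof -
  have "finite S" using assms(1,2) finite_subset by blast
  have "bij_betw (\<lambda>L. L - S) {L. L \<subseteq> A \<and> card L = r \<and> S \<subseteq> L} {L. L \<subseteq> A - S \<and> card L = r - card S}"
  proof (rule bij_betw_byWitness[where f'="\<lambda>L. L \<union> S"])
    show "(\<lambda>L. L - S) ` {L. L \<subseteq> A \<and> card L = r \<and> S \<subseteq> L} \<subseteq> {L. L \<subseteq> A - S \<and> card L = r - card S}"
      using assms(1) \<open>finite S\<close> by (auto simp: card_Diff_subset intro: finite_subset)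
    show "(\<lambda>L. L \<union> S) ` {L. L \<subseteq> A - S \<and> card L = r - card S} \<subseteq> {L. L \<subseteq> A \<and> card L = r \<and> S \<subseteq> L}"
    proof safe
      fix L assume "L \<subseteq> A - S" "card L = r - card S"
      moreover from this have "finite L" using assms(1) finite_subset by blast
      ultimately show "card (L \<union> S) = r" using assms(3) \<open>finite S\<close> by (subst card_Un_disjoint) auto
    qed (use assms(2) in auto)
  qed auto
  hence "card {L. L \<subseteq> A \<and> card L = r \<and> S \<subseteq> L} = card {L. L \<subseteq> A - S \<and> card L = r - card S}"
    by (rule bij_betw_same_card)
  also have "\<dots> = card (A - S) choose (r - card S)" using assms(1) by (intro n_subsets) auto
  finally show ?thesis using assms(2) \<open>finite S\<close> by (simp add: card_Diff_subset)
qed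

lemma card_subsets_containing_le:
  assumes "card S \<le> r"
  shows "card {L. L \<subseteq> {..<N} \<and> card L = r \<and> S \<subseteq> L} \<le> (N - card S) choose (r - card S)"
proof (cases "S \<subseteq> {..<N}")
  case True
  thus ?thesis using card_supersets[OF _ True assms] by simp
next
  case False
  hence "{L. L \<subseteq> {..<N} \<and> card L = r \<and> S \<subseteq> L} = {}" by auto
  thus ?thesis by (metis card.empty zero_le)
qed

lemma card_Int_ge_of_subsets:
  assumes "finite A" "L \<subseteq> A" "S \<subseteq> A"
  shows "card L - (card A - card S) \<le> card (L \<inter> S)"
proof -
  have "card L \<le> card (L \<inter> S) + card (L - S)" by (metis Int_Diff_Un card_Un_le)
  moreover have "card (L - S) \<le> card (A - S)" using assms by (intro card_mono) auto
  ultimately show ?thesis using assms by (simp add: card_Diff_subset finite_subset)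
qed

definition layers :: "nat \<Rightarrow> nat \<Rightarrow> nat set set" where
  "layers N r = {L. L \<subseteq> {..<N} \<and> card L = r}"

text \<open>The canonical layered code: every layer \<open>L\<close> carries an MDS code of length \<open>r\<close> and dimension
  \<open>R = r - (N - K)\<close> on the nodes of \<open>L\<close>, namely the values at \<open>i + 1\<close> of a polynomial of degree
  below \<open>R\<close>. Any \<open>K\<close> nodes, and any \<open>D\<close> helpers of a lost node \<open>j\<close>, meet every layer
  (through \<open>j\<close>) in at least \<open>R\<close> further nodes; a helper sends exactly its symbols in the
  layers it shares with \<open>j\<close>.\<close>

definition layered_node :: "nat \<Rightarrow> nat \<Rightarrow> nat \<Rightarrow> nat \<Rightarrow> (nat set \<times> nat \<Rightarrow> int) \<Rightarrow> nat set \<Rightarrow> int" where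
  "layered_node N r R i v = (\<lambda>L\<in>{L\<in>layers N r. i \<in> L}. \<Sum>a<R. v (L, a) * (int i + 1) ^ a)"

definition shared_layers :: "nat \<Rightarrow> nat \<Rightarrow> nat \<Rightarrow> nat \<Rightarrow> nat set set" where
  "shared_layers N r i j = {L\<in>layers N r. i \<in> L \<and> j \<in> L \<and> i \<noteq> j}"

lemma finite_layers: "finite (layers N r)"
  by (rule finite_subset[of _ "Pow {..<N}"]) (auto simp: layers_def)

lemma card_layers: "card (layers N r) = N choose r"
  by (simp add: layers_def n_subsets)

lemma layered_node_reconstruct:
  assumes "Ks \<subseteq> {..<N}" "card Ks = K" "R = r - (N - K)"
    and "v \<in> extensional (layers N r \<times> {..<R})" "v' \<in> extensional (layers N r \<times> {..<R})"
    and eq: "\<forall>i\<in>Ks. layered_node N r R i v = layered_node N r R i v'"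
  shows "v = v'"
proof (rule extensionalityI[OF assms(4,5)])
  fix p assume "p \<in> layers N r \<times> {..<R}"
  then obtain L a where p: "p = (L, a)" "L \<in> layers N r" "a < R" by auto
  have "R \<le> card (L \<inter> Ks)"
    using card_Int_ge_of_subsets[of "{..<N}" L Ks] p(2) assms(1-3) by (auto simp: layers_def)
  moreover have "(\<Sum>a<R. v (L, a) * (int i + 1) ^ a) = (\<Sum>a<R. v' (L, a) * (int i + 1) ^ a)"
    if "i \<in> L \<inter> Ks" for i
    using fun_cong[OF bspec[OF eq, of i], of L] that p(2) by (simp add: layered_node_def)
  ultimately have "\<forall>a<R. v (L, a) = v' (L, a)"
    using p(2) by (intro coeffs_eq_if_agree_on_nat_points) (auto simp: layers_def intro: finite_subset)
  thus "v p = v' p" using p by simp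
qed

lemma layered_node_repair:
  assumes "K \<le> D" "D < N" "1 \<le> r" "R = r - (N - K)" "j < N" "H \<subseteq> {..<N} - {j}" "card H = D"
    and eq: "\<forall>i\<in>H. restrict (layered_node N r R i v) (shared_layers N r i j)
      = restrict (layered_node N r R i v') (shared_layers N r i j)"
  shows "layered_node N r R j v = layered_node N r R j v'"
  unfolding layered_node_def
proof (rule restrict_ext)
  fix L assume L: "L \<in> {L\<in>layers N r. j \<in> L}"
  have "card (L - {j}) - (card ({..<N} - {j}) - card H) \<le> card ((L - {j}) \<inter> H)"
    using L assms(6) by (intro card_Int_ge_of_subsets) (auto simp: layers_def)
  hence "R \<le> card ((L - {j}) \<inter> H)"
    using L assms by (simp add: layers_def)
  moreover have "(\<Sum>a<R. v (L, a) * (int i + 1) ^ a) = (\<Sum>a<R. v' (L, a) * (int i + 1) ^ a)"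
    if "i \<in> (L - {j}) \<inter> H" for i
    using fun_cong[OF bspec[OF eq, of i], of L] that L by (simp add: layered_node_def shared_layers_def)
  ultimately have "\<forall>a<R. v (L, a) = v' (L, a)"
    using L by (intro coeffs_eq_if_agree_on_nat_points) (auto simp: layers_def intro: finite_subset)
  thus "(\<Sum>a<R. v (L, a) * (int j + 1) ^ a) = (\<Sum>a<R. v' (L, a) * (int j + 1) ^ a)" by simp
qed

lemma layered_code_family:
  assumes "K \<le> D" "D < N" "2 \<le> r" "r \<le> N" and R: "R = r - (N - K)" "1 \<le> R" and "1 \<le> q"
  shows "\<exists>(X::(nat set \<times> nat \<Rightarrow> int) set) (Y::nat \<Rightarrow> (nat set \<Rightarrow> int) set)
      (Z::nat \<Rightarrow> nat \<Rightarrow> nat set \<Rightarrow> (nat set \<Rightarrow> int) set) f g.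
    exact_repair_code_on N K D X Y Z f g \<and> card X = q ^ (R * (N choose r)) \<and>
    (\<forall>i. card (Y i) \<le> (q * ((R + 1) * (N + 1) ^ R)) ^ ((N - 1) choose (r - 1))) \<and>
    (\<forall>i j H. card (Z i j H) \<le> (q * ((R + 1) * (N + 1) ^ R)) ^ ((N - 2) choose (r - 2)))"
proof -
  define Q where "Q = q * ((R + 1) * (N + 1) ^ R)"
  define X :: "(nat set \<times> nat \<Rightarrow> int) set" where "X = (\<Pi>\<^sub>E p\<in>layers N r \<times> {..<R}. {0..<int q})"
  define Y :: "nat \<Rightarrow> (nat set \<Rightarrow> int) set" where
    "Y i = (\<Pi>\<^sub>E L\<in>{L\<in>layers N r. i \<in> L}. {0..<int Q})" for i
  define Z :: "nat \<Rightarrow> nat \<Rightarrow> nat set \<Rightarrow> (nat set \<Rightarrow> int) set" where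
    "Z i j H = (\<Pi>\<^sub>E L\<in>shared_layers N r i j. {0..<int Q})" for i j H
  have "1 \<le> Q" using \<open>1 \<le> q\<close> by (simp add: Q_def Suc_le_eq)
  have contents_in: "layered_node N r R i v \<in> Y i" if "i < N" "v \<in> X" for i v
  proof -
    have "0 \<le> (\<Sum>a<R. v (L, a) * (int i + 1) ^ a) \<and>
        (\<Sum>a<R. v (L, a) * (int i + 1) ^ a) < int q * ((int R + 1) * (int N + 1) ^ R)"
      if "L \<in> layers N r" for L
      by (rule poly_sum_bounds) (use \<open>v \<in> X\<close> \<open>i < N\<close> \<open>1 \<le> q\<close> that in \<open>auto simp: X_def PiE_iff\<close>)
    thus ?thesis by (auto simp: layered_node_def Y_def Q_def algebra_simps)
  qed
  have "exact_repair_code_on N K D X Y Z (layered_node N r R)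
      (\<lambda>i j H w. restrict w (shared_layers N r i j))"
  proof unfold_locales
    show "v = v'" if "Ks \<subseteq> {..<N}" "card Ks = K" "v \<in> X" "v' \<in> X"
      and "\<forall>i\<in>Ks. layered_node N r R i v = layered_node N r R i v'" for Ks v v'
      using that by (intro layered_node_reconstruct[OF _ _ R(1)]) (auto simp: X_def PiE_iff)
    show "layered_node N r R j v = layered_node N r R j v'" if "j < N" "H \<subseteq> {..<N} - {j}" "card H = D"
      and "\<forall>i\<in>H. restrict (layered_node N r R i v) (shared_layers N r i j)
        = restrict (layered_node N r R i v') (shared_layers N r i j)" for j H v v'
      using that assms by (intro layered_node_repair[of K D N r R]) auto
  qed (use finite_layers contents_in in
      \<open>auto simp: X_def Y_def Z_def shared_layers_def PiE_iff intro: finite_PiE\<close>)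
  moreover have "card X = q ^ (R * (N choose r))"
    using finite_layers by (simp add: X_def card_PiE card_cartesian_product card_layers mult.commute)
  moreover have "card (Y i) \<le> Q ^ ((N - 1) choose (r - 1))" for i
  proof -
    have "card {L\<in>layers N r. i \<in> L} \<le> (N - 1) choose (r - 1)"
      using card_subsets_containing_le[of "{i}" r N] assms(3) by (simp add: layers_def)
    thus ?thesis using finite_layers \<open>1 \<le> Q\<close> by (simp add: Y_def card_PiE power_increasing del: of_nat_mult)
  qed
  moreover have "card (Z i j H) \<le> Q ^ ((N - 2) choose (r - 2))" for i j H
  proof -
    have "card (shared_layers N r i j) \<le> (N - 2) choose (r - 2)"
    proof (cases "i = j")
      case False
      thus ?thesis using card_subsets_containing_le[of "{i, j}" r N] assms(3)
        by (simp add: shared_layers_def layers_def numeral_2_eq_2)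
    qed (simp add: shared_layers_def)
    thus ?thesis using finite_layers \<open>1 \<le> Q\<close>
      by (simp add: Z_def shared_layers_def card_PiE power_increasing del: of_nat_mult)
  qed
  ultimately show ?thesis unfolding Q_def by blast
qed

subsection \<open>Capacity estimates\<close>

lemma C_func_bounds:
  assumes "1 \<le> K" "K \<le> D" "\<alpha> > 0" "\<alpha> \<le> \<gamma>"
  shows "\<alpha> \<le> C_func K D \<alpha> \<gamma>" and "C_func K D \<alpha> \<gamma> \<le> real K * \<alpha>"
proof -
  have "C_func K D \<alpha> \<gamma> = min \<alpha> \<gamma> + (\<Sum>j\<in>{..<K} - {0}. min \<alpha> ((real D - real j) / real D * \<gamma>))"
    unfolding C_func_def using assms(1,2) by (subst sum.remove[of _ 0]) auto
  moreover have "0 \<le> (\<Sum>j\<in>{..<K} - {0}. min \<alpha> ((real D - real j) / real D * \<gamma>))"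
    using assms by (intro sum_nonneg) auto
  ultimately show "\<alpha> \<le> C_func K D \<alpha> \<gamma>" using assms(4) by simp
  have "C_func K D \<alpha> \<gamma> \<le> (\<Sum>j<K. \<alpha>)" unfolding C_func_def by (intro sum_mono) auto
  thus "C_func K D \<alpha> \<gamma> \<le> real K * \<alpha>" by simp
qed

lemma C_func_at_MBR:
  assumes "1 \<le> K" "K \<le> D" "\<alpha> \<ge> 0"
  shows "C_func K D \<alpha> \<alpha> = \<alpha> * real (\<Sum>j<K. D - j) / real D"
proof -
  have "C_func K D \<alpha> \<alpha> = (\<Sum>j<K. (real D - real j) / real D * \<alpha>)"
    unfolding C_func_def
  proof (intro sum.cong refl)
    fix j assume "j \<in> {..<K}"
    hence "(real D - real j) / real D * \<alpha> \<le> 1 * \<alpha>" using assms by (intro mult_right_mono) auto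
    thus "min \<alpha> ((real D - real j) / real D * \<alpha>) = (real D - real j) / real D * \<alpha>" by simp
  qed
  also have "\<dots> = \<alpha> * (\<Sum>j<K. real D - real j) / real D"
    by (simp add: sum_distrib_left sum_divide_distrib algebra_simps)
  also have "(\<Sum>j<K. real D - real j) = real (\<Sum>j<K. D - j)"
    unfolding of_nat_sum using assms(2) by (intro sum.cong refl) (simp add: of_nat_diff)
  finally show ?thesis .
qed

lemma C_exact_at_MBR:
  assumes "1 \<le> K" "K \<le> D" "D < N" "\<alpha> > 0"
  shows "C_exact N K D \<alpha> \<alpha> = C_func K D \<alpha> \<alpha>"
proof (rule antisym)
  show "C_exact N K D \<alpha> \<alpha> \<le> C_func K D \<alpha> \<alpha>" using C_exact_le_C_func assms by simp
  have "2 * 1 \<le> (D + 1) * (N + 1) ^ D" using assms(1,2) by (intro mult_le_mono one_le_power) auto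
  hence "2 * 1 \<le> ((D + 1) * (N + 1) ^ D) * ((D + 1) * (N + 1) ^ D)" by (intro mult_le_mono) auto
  hence "2 \<le> ((D + 1) * (N + 1) ^ D) ^ 2" by (simp add: power2_eq_square)
  hence "\<alpha> * real (\<Sum>j<K. D - j) / real D \<le> C_exact N K D \<alpha> \<alpha>"
    using C_exact_ge_of_code_family[OF assms(1-4) _ _ _ _ mbr_code_family[OF assms(2,3)]] assms
    by simp
  thus "C_func K D \<alpha> \<alpha> \<le> C_exact N K D \<alpha> \<alpha>" using C_func_at_MBR assms by simp
qed

lemma C_exact_ge_layered:
  assumes "1 \<le> K" "K \<le> D" "D < N" "\<alpha> > 0" "\<gamma> \<ge> 0" "2 \<le> r" "r \<le> N" "N - K < r"
    and bandwidth: "real D * real (r - 1) * \<alpha> \<le> \<gamma> * real (N - 1)"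
  shows "\<alpha> * real (r - (N - K)) * real N / real r \<le> C_exact N K D \<alpha> \<gamma>"
proof -
  define R where "R = r - (N - K)"
  define Au where "Au = (N - 1) choose (r - 1)"
  define Bu where "Bu = (N - 2) choose (r - 2)"
  have "0 < Au" using assms(6,7) by (simp add: Au_def)
  have binomial_r: "real r * real (N choose r) = real N * real Au"
    using times_binomial_minus1_eq[of r N] assms(6) unfolding Au_def by (metis of_nat_mult not_numeral_le_zero not_gr0)
  have "(r - 1) * ((N - 1) choose (r - 1)) = (N - 1) * ((N - 1 - 1) choose (r - 1 - 1))"
    using assms(6) by (intro times_binomial_minus1_eq) simp
  hence binomial_r1: "real (r - 1) * real Au = real (N - 1) * real Bu"
    unfolding Au_def Bu_def by (metis of_nat_mult diff_diff_left one_add_one)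
  have "real D * real Bu * \<alpha> \<le> \<gamma> * real Au"
  proof (rule mult_right_le_imp_le)
    have "real D * real Bu * \<alpha> * real (N - 1) = (real D * real (r - 1) * \<alpha>) * real Au"
      using binomial_r1 by (simp add: algebra_simps)
    also have "\<dots> \<le> \<gamma> * real (N - 1) * real Au" using bandwidth by (intro mult_right_mono) auto
    finally show "real D * real Bu * \<alpha> * real (N - 1) \<le> \<gamma> * real Au * real (N - 1)"
      by (simp add: ac_simps)
    show "0 < real (N - 1)" using assms(1-3) by simp
  qed
  moreover have "2 * 1 \<le> (R + 1) * (N + 1) ^ R" using assms(8) by (intro mult_le_mono one_le_power) (auto simp: R_def)
  moreover have "\<exists>(X::(nat set \<times> nat \<Rightarrow> int) set) (Y::nat \<Rightarrow> (nat set \<Rightarrow> int) set)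
      (Z::nat \<Rightarrow> nat \<Rightarrow> nat set \<Rightarrow> (nat set \<Rightarrow> int) set) f g.
    exact_repair_code_on N K D X Y Z f g \<and> card X = q ^ (R * (N choose r)) \<and>
    (\<forall>i. card (Y i) \<le> (q * ((R + 1) * (N + 1) ^ R)) ^ Au) \<and>
    (\<forall>i j H. card (Z i j H) \<le> (q * ((R + 1) * (N + 1) ^ R)) ^ Bu)" if "2 \<le> q" for q
    unfolding Au_def Bu_def using that assms(8) by (intro layered_code_family[OF assms(2,3,6,7) R_def]) (auto simp: R_def)
  ultimately have "\<alpha> * real (R * (N choose r)) / real Au \<le> C_exact N K D \<alpha> \<gamma>"
    by (intro C_exact_ge_of_code_family[OF assms(1-5) \<open>0 < Au\<close>]) auto
  moreover have "\<alpha> * real (R * (N choose r)) / real Au = \<alpha> * real R * real N / real r"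
    using binomial_r \<open>0 < Au\<close> assms(6) by (simp add: field_simps)
  ultimately show ?thesis by (simp add: R_def)
qed

text \<open>A layered code needs an integer layer size \<open>r\<close>; rounding the ideal real size \<open>x\<close> up to
  \<open>r = \<lfloor>x\<rfloor> + 1\<close> keeps the bandwidth constraint, since only \<open>r - 1 \<le> x\<close> enters it.\<close>

lemma C_exact_ge_of_layer_size:
  assumes "1 \<le> K" "K \<le> D" "D < N" "\<alpha> > 0" "\<gamma> \<ge> 0"
    and x: "real (N - K) + 1 \<le> x" "x \<le> real N - 1" and bandwidth: "real D * x * \<alpha> \<le> \<gamma> * (real N - 1)"
  shows "real K * \<alpha> * (1 - real (N - K) / x) \<le> C_exact N K D \<alpha> \<gamma>"
proof -
  define r where "r = nat \<lfloor>x\<rfloor> + 1"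
  have "real (nat \<lfloor>x\<rfloor>) = real_of_int \<lfloor>x\<rfloor>" using x(1) by (intro of_nat_nat) simp
  hence floor: "real (nat \<lfloor>x\<rfloor>) \<le> x" "x < real (nat \<lfloor>x\<rfloor>) + 1"
    using of_int_floor_le[of x] real_of_int_floor_add_one_gt[of x] by linarith+
  have "x < real r" unfolding r_def of_nat_add of_nat_1 using floor(2) by linarith
  have "real (r - 1) \<le> x" unfolding r_def using floor(1) by simp
  hence "N - K < r" "2 \<le> r" using x(1) \<open>x < real r\<close> by linarith+
  have "r \<le> N" using floor x(2) assms(1-3) by (simp add: r_def nat_le_iff le_diff_conv2 floor_le_iff)
  have "real D * real (r - 1) * \<alpha> \<le> real D * x * \<alpha>"
    using \<open>real (r - 1) \<le> x\<close> assms(4) by (intro mult_right_mono mult_left_mono) auto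
  also have "\<dots> \<le> \<gamma> * real (N - 1)" using bandwidth assms(1-3) by (simp add: of_nat_diff)
  finally have "\<alpha> * real (r - (N - K)) * real N / real r \<le> C_exact N K D \<alpha> \<gamma>"
    by (intro C_exact_ge_layered) (use assms \<open>N - K < r\<close> \<open>2 \<le> r\<close> \<open>r \<le> N\<close> in auto)
  moreover have "real K * \<alpha> * (1 - real (N - K) / x) \<le> \<alpha> * real (r - (N - K)) * real N / real r"
  proof -
    have "1 - real (N - K) / x \<le> 1 - real (N - K) / real r"
      using \<open>x < real r\<close> x(1) by (intro diff_left_mono divide_left_mono) auto
    also have "\<dots> = real (r - (N - K)) / real r" using \<open>N - K < r\<close> by (simp add: of_nat_diff field_simps)
    finally have "real K * \<alpha> * (1 - real (N - K) / x) \<le> real K * \<alpha> * (real (r - (N - K)) / real r)"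
      using assms(4) by (intro mult_left_mono) auto
    also have "\<dots> \<le> real N * \<alpha> * (real (r - (N - K)) / real r)"
      using assms(2-4) by (intro mult_right_mono) auto
    finally show ?thesis by (simp add: ac_simps)
  qed
  ultimately show ?thesis by linarith
qed

definition interpolated_bandwidth :: "nat \<Rightarrow> nat \<Rightarrow> real \<Rightarrow> real \<Rightarrow> real" where
  "interpolated_bandwidth K D \<alpha> s = s * (real D * \<alpha> / (real D - real K + 1)) + (1 - s) * \<alpha>"

lemma interpolated_bandwidth_ge:
  assumes "1 \<le> K" "K \<le> D" "\<alpha> > 0" "0 \<le> s"
  shows "\<alpha> \<le> interpolated_bandwidth K D \<alpha> s"
proof -
  have "\<alpha> \<le> real D * \<alpha> / (real D - real K + 1)"
    using assms(1-3) by (simp add: le_divide_eq)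
  thus ?thesis
    using mult_left_mono[OF _ assms(4)] by (fastforce simp: interpolated_bandwidth_def algebra_simps)
qed

lemma C_exact_div_C_func_le_1:
  assumes "1 \<le> K" "K \<le> D" "D < N" "\<alpha> > 0" "\<alpha> \<le> \<gamma>"
  shows "C_exact N K D \<alpha> \<gamma> / C_func K D \<alpha> \<gamma> \<le> 1"
  using C_exact_le_C_func[OF assms(1-3)] C_func_bounds(1)[OF assms(1,2,4,5)] assms(4,5) by simp

lemma C_exact_div_C_func_ge_interpolated:
  assumes "1 \<le> K" "K \<le> D" "D < N" "\<alpha> > 0" "0 < s" "s \<le> 1"
    and large: "(real (N - K) + 1) * (real (D - K) + 1) / s \<le> real N - 1"
  defines "\<gamma> \<equiv> interpolated_bandwidth K D \<alpha> s"
  shows "1 - real (N - K) * (real (D - K) + 1) / s / (real N - 1) \<le> C_exact N K D \<alpha> \<gamma> / C_func K D \<alpha> \<gamma>"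
proof -
  define \<delta> where "\<delta> = real (D - K) + 1"
  have \<delta>: "\<delta> = real D - real K + 1" "1 \<le> \<delta>" using assms(2) by (simp_all add: \<delta>_def of_nat_diff)
  define x where "x = s * (real N - 1) / \<delta>"
  have "0 < real N - 1" using assms(1-3) by simp
  have "real (N - K) + 1 \<le> x" using large \<delta> assms(5) by (simp add: x_def \<delta>_def field_simps)
  moreover have "x \<le> real N - 1"
    using \<delta> assms(6) \<open>0 < real N - 1\<close> by (simp add: x_def divide_le_eq mult_mono)
  moreover have "real D * x * \<alpha> \<le> \<gamma> * (real N - 1)"
  proof -
    have "real D * x * \<alpha> = s * (real D * \<alpha> / \<delta>) * (real N - 1)" by (simp add: x_def)
    also have "\<dots> \<le> \<gamma> * (real N - 1)"
      using assms(4,6) \<open>0 < real N - 1\<close> by (intro mult_right_mono) (auto simp: \<gamma>_def \<delta> interpolated_bandwidth_def)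
    finally show ?thesis .
  qed
  moreover have "\<alpha> \<le> \<gamma>" using interpolated_bandwidth_ge[OF assms(1,2,4)] assms(5) by (simp add: \<gamma>_def)
  ultimately have C_exact_ge: "real K * \<alpha> * (1 - real (N - K) / x) \<le> C_exact N K D \<alpha> \<gamma>"
    using C_exact_ge_of_layer_size[OF assms(1-4)] assms(4) by simp
  have "0 \<le> 1 - real (N - K) / x" using \<open>real (N - K) + 1 \<le> x\<close> by (simp add: field_simps)
  have "1 - real (N - K) / x \<le> C_exact N K D \<alpha> \<gamma> / (real K * \<alpha>)"
    using C_exact_ge assms(1,4) by (simp add: le_divide_eq mult.commute)
  also have "\<dots> \<le> C_exact N K D \<alpha> \<gamma> / C_func K D \<alpha> \<gamma>"
    using C_func_bounds[OF assms(1,2,4) \<open>\<alpha> \<le> \<gamma>\<close>] C_exact_ge \<open>0 \<le> 1 - real (N - K) / x\<close> assms(1,4)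
    by (intro divide_left_mono) (auto intro: order_trans[rotated])
  finally show ?thesis using \<delta> by (simp add: x_def \<delta>_def field_simps)
qed

lemma C_exact_div_C_func_at_MBR:
  assumes "1 \<le> K" "K \<le> D" "D < N" "\<alpha> > 0"
  shows "C_exact N K D \<alpha> \<alpha> / C_func K D \<alpha> \<alpha> = 1"
  using C_exact_at_MBR[OF assms] C_func_bounds(1)[OF assms(1,2,4) order_refl] assms(4) by simp

lemma real_add_nat_tendsto_at_top: "filterlim (\<lambda>M. real (n + M) - 1) at_top sequentially"
  using filterlim_tendsto_add_at_top[OF tendsto_const[of "real n - 1"] filterlim_real_sequentially]
  by (simp add: algebra_simps)

lemma one_minus_div_real_add_tendsto_1: "(\<lambda>M. 1 - c / (real (n + M) - 1)) \<longlonglongrightarrow> 1"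
proof -
  have "(\<lambda>M. c / (real (n + M) - 1)) \<longlonglongrightarrow> 0"
    by (rule tendsto_divide_0[OF tendsto_const filterlim_at_top_imp_at_infinity[OF real_add_nat_tendsto_at_top]])
  thus ?thesis using tendsto_diff[OF tendsto_const] by fastforce
qed

lemma C_exact_div_C_func_eventually_ge:
  assumes "1 \<le> k" "k \<le> d" "d < n" "\<alpha> > 0" "0 < s" "s \<le> 1"
  defines "\<gamma> M \<equiv> interpolated_bandwidth (k + M) (d + M) \<alpha> s"
  shows "\<forall>\<^sub>F M in sequentially. 1 - real (n - k) * (real (d - k) + 1) / s / (real (n + M) - 1)
    \<le> C_exact (n + M) (k + M) (d + M) \<alpha> (\<gamma> M) / C_func (k + M) (d + M) \<alpha> (\<gamma> M)"
proof -
  have "\<forall>\<^sub>F M in sequentially. (real (n - k) + 1) * (real (d - k) + 1) / s \<le> real (n + M) - 1"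
    using real_add_nat_tendsto_at_top unfolding filterlim_at_top by blast
  thus ?thesis
  proof (rule eventually_mono)
    fix M assume "(real (n - k) + 1) * (real (d - k) + 1) / s \<le> real (n + M) - 1"
    hence "1 - real ((n + M) - (k + M)) * (real ((d + M) - (k + M)) + 1) / s / (real (n + M) - 1)
      \<le> C_exact (n + M) (k + M) (d + M) \<alpha> (\<gamma> M) / C_func (k + M) (d + M) \<alpha> (\<gamma> M)"
      unfolding \<gamma>_def by (intro C_exact_div_C_func_ge_interpolated) (use assms in auto)
    thus "1 - real (n - k) * (real (d - k) + 1) / s / (real (n + M) - 1)
      \<le> C_exact (n + M) (k + M) (d + M) \<alpha> (\<gamma> M) / C_func (k + M) (d + M) \<alpha> (\<gamma> M)" by simp
  qed
qed

theorem theorem5p2: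
  fixes n k d :: nat and \<alpha> s :: real
  assumes "1 \<le> k" "k \<le> d" "d < n" "\<alpha> > 0" "0 \<le> s" "s \<le> 1"
  shows "(\<lambda>M::nat.
            let \<gamma>MSR = real (d + M) * \<alpha> / (real (d + M) - real (k + M) + 1);
                \<gamma>MBR = \<alpha>;
                \<gamma> = s * \<gamma>MSR + (1 - s) * \<gamma>MBR
            in C_exact (n + M) (k + M) (d + M) \<alpha> \<gamma> / C_func (k + M) (d + M) \<alpha> \<gamma>)
         \<longlonglongrightarrow> 1"
proof -
  define \<gamma> where "\<gamma> M = interpolated_bandwidth (k + M) (d + M) \<alpha> s" for M
  define ratio where "ratio M = C_exact (n + M) (k + M) (d + M) \<alpha> (\<gamma> M) / C_func (k + M) (d + M) \<alpha> (\<gamma> M)" for M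
  have "ratio \<longlonglongrightarrow> 1"
  proof (cases "s = 0")
    case True
    have "ratio M = 1" for M
      using C_exact_div_C_func_at_MBR[of "k + M" "d + M" "n + M" \<alpha>] True assms
      by (simp add: ratio_def \<gamma>_def interpolated_bandwidth_def)
    hence "ratio = (\<lambda>_. 1)" by blast
    thus ?thesis by simp
  next
    case False
    have lower: "\<forall>\<^sub>F M in sequentially. 1 - real (n - k) * (real (d - k) + 1) / s / (real (n + M) - 1) \<le> ratio M"
      unfolding ratio_def \<gamma>_def by (rule C_exact_div_C_func_eventually_ge) (use assms False in auto)
    have "ratio M \<le> 1" for M
      using C_exact_div_C_func_le_1 interpolated_bandwidth_ge assms by (simp add: ratio_def \<gamma>_def)
    hence "\<forall>\<^sub>F M in sequentially. ratio M \<le> 1" by simp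
    thus ?thesis by (rule tendsto_sandwich[OF lower _ one_minus_div_real_add_tendsto_1 tendsto_const])
  qed
  thus ?thesis unfolding Let_def ratio_def \<gamma>_def interpolated_bandwidth_def .
qed

end
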